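(* Let $H$ be an $\mathcal H$-class of $\mathcal{OR}_n$ containing an idempotent of rank $k$. If $k=n$ then $H=W'$, and if $k\in\{1,\dots,m\}$ then $H$ is isomorphic (as a group) to the symmetric group $S_k$.
   Context: Let $m\ge 1$, $n=2m$, $\mathbf n=\{1,\dots,n\}$, $\theta(i)=n+1-i$, written $\bar i$. A proper subset $I\subset\mathbf n$ is admissible if $I\cap\theta(I)=\emptyset$; $\mathbf n$ and $\emptyset$ are also admissible. For an injective partial map $\sigma$ of $\mathbf n$, $I(\sigma)$ is its domain, $J(\sigma)$ its image, $\mathrm{rk}(\sigma)=|I(\sigma)|$; products are compositions of partial maps. $W=\{\sigma\in S_n:\sigma(\bar i)=\overline{\sigma(i)}\ \forall i\}$, $W'=\{\sigma\in W:|\sigma(\{1,\dots,m\})\cap\{m+1,\dots,n\}|\text{ even}\}$. An admissible $m$-subset is of type I if it contains an even number of elements $>m$, type II otherwise. $\mathcal{OR}_n$ consists of the injective partial maps $\sigma$ with: $\mathrm{rk}(\sigma)<m$ and $I(\sigma),J(\sigma)$ admissible; or $\mathrm{rk}(\sigma)=m$ and $I(\sigma),J(\sigma)$ admissible of the same type; or $\sigma\in W'$. $\mathcal H$ is Green's $\mathcal H$-relation on the monoid $\mathcal{OR}_n$. *)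

theory Defs
  imports Main "HOL-Algebra.Sym_Groups"
begin

text \<open>Partial maps of the set n = 1..n are represented as nat to nat option;
  the domain is dom, the image is ran.  Products are compositions of partial maps
  (s * t = s after t, i.e. map_comp).\<close>

definition theta :: "nat \<Rightarrow> nat \<Rightarrow> nat" where
  "theta n i = n + 1 - i"

definition admissible :: "nat \<Rightarrow> nat set \<Rightarrow> bool" where
  "admissible n I \<longleftrightarrow> I = {1..n} \<or> I = {} \<or>
     (I \<subset> {1..n} \<and> I \<inter> theta n ` I = {})"

definition pinj :: "nat \<Rightarrow> (nat \<Rightarrow> nat option) \<Rightarrow> bool" where
  "pinj n s \<longleftrightarrow> dom s \<subseteq> {1..n} \<and> ran s \<subseteq> {1..n} \<and> inj_on s (dom s)"

definition rk :: "(nat \<Rightarrow> nat option) \<Rightarrow> nat" where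
  "rk s = card (dom s)"

definition Wgrp :: "nat \<Rightarrow> (nat \<Rightarrow> nat option) set" where
  "Wgrp m = {s. pinj (2*m) s \<and> dom s = {1..2*m} \<and>
      (\<forall>i\<in>{1..2*m}. s (theta (2*m) i) = map_option (theta (2*m)) (s i))}"

definition Wprime :: "nat \<Rightarrow> (nat \<Rightarrow> nat option) set" where
  "Wprime m = {s \<in> Wgrp m. even (card (ran (s |` {1..m}) \<inter> {m+1..2*m}))}"

definition typeI :: "nat \<Rightarrow> nat set \<Rightarrow> bool" where
  "typeI m I \<longleftrightarrow> even (card (I \<inter> {m+1..2*m}))"

definition ORn :: "nat \<Rightarrow> (nat \<Rightarrow> nat option) set" where
  "ORn m = {s. pinj (2*m) s \<and>
      ((rk s < m \<and> admissible (2*m) (dom s) \<and> admissible (2*m) (ran s)) \<or>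
       (rk s = m \<and> admissible (2*m) (dom s) \<and> admissible (2*m) (ran s) \<and>
          (typeI m (dom s) \<longleftrightarrow> typeI m (ran s))) \<or>
       s \<in> Wprime m)}"

definition greenR :: "nat \<Rightarrow> (nat \<Rightarrow> nat option) \<Rightarrow> (nat \<Rightarrow> nat option) \<Rightarrow> bool" where
  "greenR m a b \<longleftrightarrow> (\<exists>x\<in>ORn m. b = a \<circ>\<^sub>m x) \<and> (\<exists>y\<in>ORn m. a = b \<circ>\<^sub>m y)"

definition greenL :: "nat \<Rightarrow> (nat \<Rightarrow> nat option) \<Rightarrow> (nat \<Rightarrow> nat option) \<Rightarrow> bool" where
  "greenL m a b \<longleftrightarrow> (\<exists>x\<in>ORn m. b = x \<circ>\<^sub>m a) \<and> (\<exists>y\<in>ORn m. a = y \<circ>\<^sub>m b)"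

definition greenH :: "nat \<Rightarrow> (nat \<Rightarrow> nat option) \<Rightarrow> (nat \<Rightarrow> nat option) \<Rightarrow> bool" where
  "greenH m a b \<longleftrightarrow> greenR m a b \<and> greenL m a b"

definition Hclass :: "nat \<Rightarrow> (nat \<Rightarrow> nat option) \<Rightarrow> (nat \<Rightarrow> nat option) set" where
  "Hclass m e = {a \<in> ORn m. greenH m a e}"

definition Hgroup :: "nat \<Rightarrow> (nat \<Rightarrow> nat option) \<Rightarrow> (nat \<Rightarrow> nat option) monoid" where
  "Hgroup m e = \<lparr>carrier = Hclass m e, mult = (\<lambda>a b. a \<circ>\<^sub>m b), one = e\<rparr>"

end

theory Submission
  imports Defs
begin

text \<open>
  An injective idempotent partial map is the partial identity on its domain D, and the
  partial inverse of a map whose domain equals its image is a two-sided inverse up to this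
  partial identity. So if OR_n is closed under such inverses, the H-class of an idempotent
  with domain D consists of the elements of OR_n with domain and image D. Closure holds
  trivially in ranks below n; for W' it holds because a permutation of 1..n sends as many
  elements of 1..m above m as it sends elements above m into 1..m, which makes the parity
  condition defining W' invariant under inversion. In rank k \<le> m the set D is admissible and every
  permutation of D satisfies the type condition trivially, so the H-class is the group of all
  permutations of D, realised as partial maps, which is isomorphic to S_k.
\<close>

lemma ran_map_comp_subset: "ran (f \<circ>\<^sub>m g) \<subseteq> ran f"
  by (auto simp: ran_def map_comp_def split: option.splits)

lemma dom_map_comp_subset: "dom (f \<circ>\<^sub>m g) \<subseteq> dom g"
  by (auto simp: dom_def map_comp_def split: option.splits)

lemma ran_restrict_subset: "ran (a |` A) \<subseteq> ran a"
  by (auto simp: ran_def restrict_map_def)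

lemma ran_restrict_map: "ran (a |` A) = Some -` a ` A"
  by (force simp: ran_def restrict_map_def)

lemma ran_restrict_Some [simp]: "ran (Some |` A) = A"
  by (auto simp: ran_def restrict_map_def)

lemma ran_restrict_Some_comp [simp]: "ran ((Some \<circ> h) |` A) = h ` A"
  by (auto simp: ran_restrict_map)

lemma restrict_Some_map_comp: "ran a \<subseteq> A \<Longrightarrow> (Some |` A) \<circ>\<^sub>m a = a"
  by (rule ext) (auto simp: map_comp_def restrict_map_def ran_def split: option.splits)

lemma map_comp_restrict_Some:
  assumes "dom a \<subseteq> A" shows "a \<circ>\<^sub>m (Some |` A) = a"
proof
  fix x show "(a \<circ>\<^sub>m (Some |` A)) x = a x"
    using assms by (cases "a x") (auto simp: map_comp_def restrict_map_def)
qed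

lemma bij_betw_the_map:
  assumes "inj_on a (dom a)" shows "bij_betw (the \<circ> a) (dom a) (ran a)"
proof (rule bij_betw_imageI)
  show "inj_on (the \<circ> a) (dom a)"
  proof (rule inj_onI)
    fix x y assume "x \<in> dom a" "y \<in> dom a" "(the \<circ> a) x = (the \<circ> a) y"
    then have "a x = a y" by (auto simp: domIff)
    then show "x = y" using inj_onD[OF assms] \<open>x \<in> dom a\<close> \<open>y \<in> dom a\<close> by blast
  qed
  show "(the \<circ> a) ` dom a = ran a"
    by (force simp: ran_def dom_def)
qed

lemma idempotent_map_eq_restrict_Some:
  assumes "inj_on e (dom e)" "e \<circ>\<^sub>m e = e"
  shows "e = Some |` dom e"
proof
  fix x show "e x = (Some |` dom e) x"
  proof (cases "e x")
    case (Some y)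
    then have "e y = Some y" using fun_cong[OF assms(2), of x] by simp
    then have "x = y" using Some assms(1) by (metis domI inj_onD)
    then show ?thesis using Some by (auto simp: domI)
  qed (auto simp: domIff)
qed

definition map_inv :: "('a \<Rightarrow> 'b option) \<Rightarrow> 'b \<Rightarrow> 'a option" where
  "map_inv a y = (if y \<in> ran a then Some (THE x. a x = Some y) else None)"

lemma map_inv_eq_Some_iff:
  assumes "inj_on a (dom a)"
  shows "map_inv a y = Some x \<longleftrightarrow> a x = Some y"
proof -
  have "(THE x. a x = Some y) = x'" if "a x' = Some y" for x'
    using assms that by (intro the_equality) (auto simp: inj_on_def domI)
  then show ?thesis by (auto simp: map_inv_def ran_def)
qed

lemma dom_map_inv [simp]: "dom (map_inv a) = ran a"
  by (auto simp: map_inv_def split: if_splits)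

lemma ran_map_inv: "inj_on a (dom a) \<Longrightarrow> ran (map_inv a) = dom a"
  by (auto simp: ran_def map_inv_eq_Some_iff)

lemma inj_on_map_inv: "inj_on a (dom a) \<Longrightarrow> inj_on (map_inv a) (dom (map_inv a))"
  by (rule inj_onI) (metis domD map_inv_eq_Some_iff option.inject)

lemma map_comp_map_inv:
  assumes "inj_on a (dom a)" shows "a \<circ>\<^sub>m map_inv a = Some |` ran a"
proof
  fix y show "(a \<circ>\<^sub>m map_inv a) y = (Some |` ran a) y"
  proof (cases "y \<in> ran a")
    case True
    then obtain x where "a x = Some y" by (auto simp: ran_def)
    with True show ?thesis by (simp add: map_inv_eq_Some_iff[OF assms])
  qed (simp add: map_inv_def)
qed

lemma map_inv_map_comp: "inj_on a (dom a) \<Longrightarrow> map_inv a \<circ>\<^sub>m a = Some |` dom a"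
  by (rule ext) (auto simp: map_comp_def map_inv_eq_Some_iff restrict_map_def split: option.splits)

lemma card_image_diff_commute:
  assumes "finite A" "inj_on f A"
  shows "card (f ` A - A) = card (A - f ` A)"
proof -
  have "card (f ` A - A) = card (f ` A) - card (f ` A \<inter> A)"
    using assms(1) by (metis card_Diff_subset_Int finite_Int Int_commute)
  also have "\<dots> = card (A - f ` A)"
    using assms by (simp add: card_image card_Diff_subset_Int Int_commute)
  finally show ?thesis .
qed

lemma card_ran_map_inv_restrict_diff:
  assumes inj: "inj_on a (dom a)" and S: "dom a = S" "ran a = S" "finite S" and "L \<subseteq> S"
  shows "card (ran (map_inv a |` L) - L) = card (ran (a |` L) - L)"
proof -
  define h where "h = the \<circ> a"
  have bij_h: "bij_betw h S S"
    using bij_betw_the_map[OF inj] S by (simp add: h_def)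
  have a_h: "a x = Some (h x)" if "x \<in> S" for x
    using that S(1) by (auto simp: h_def)
  have ran_a: "ran (a |` L) = h ` L"
    using \<open>L \<subseteq> S\<close> by (auto simp: ran_restrict_map a_h subset_iff)
  have "x \<in> ran (map_inv a |` L) \<longleftrightarrow> (\<exists>z\<in>L. a x = Some z)" for x
    by (auto simp: ran_restrict_map image_iff map_inv_eq_Some_iff[OF inj] eq_commute[of "Some x"])
  then have ran_inv: "ran (map_inv a |` L) = {x \<in> S. h x \<in> L}"
    using S(1) by (auto simp: h_def)
  have inj_h: "inj_on h S"
    using bij_h by (rule bij_betw_imp_inj_on)
  have "h ` (ran (map_inv a |` L) - L) = L - h ` L"
  proof
    show "h ` (ran (map_inv a |` L) - L) \<subseteq> L - h ` L"
      using inj_h \<open>L \<subseteq> S\<close> by (auto simp: ran_inv dest: inj_onD)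
    show "L - h ` L \<subseteq> h ` (ran (map_inv a |` L) - L)"
      using bij_betw_imp_surj_on[OF bij_h] \<open>L \<subseteq> S\<close> by (force simp: ran_inv)
  qed
  moreover have "inj_on h (ran (map_inv a |` L) - L)"
    using inj_h by (rule inj_on_subset) (auto simp: ran_inv)
  ultimately have "card (ran (map_inv a |` L) - L) = card (L - h ` L)"
    by (metis card_image)
  also have "\<dots> = card (h ` L - L)"
    using card_image_diff_commute[of L h] inj_h \<open>L \<subseteq> S\<close> S(3)
    by (metis finite_subset inj_on_subset)
  finally show ?thesis
    by (simp add: ran_a)
qed

definition partial_perm_group :: "'a set \<Rightarrow> ('a \<Rightarrow> 'a option) monoid" where
  "partial_perm_group D =
     \<lparr>carrier = {a. dom a = D \<and> ran a = D \<and> inj_on a D}, mult = (\<circ>\<^sub>m), one = Some |` D\<rparr>"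

locale enumerated_set =
  fixes f :: "nat \<Rightarrow> 'a" and k :: nat and D :: "'a set"
  assumes bij_f: "bij_betw f {1..k} D"
begin

definition f_inv :: "'a \<Rightarrow> nat" where
  "f_inv = inv_into {1..k} f"

definition perm_to_partial :: "(nat \<Rightarrow> nat) \<Rightarrow> 'a \<Rightarrow> 'a option" where
  "perm_to_partial p = (Some \<circ> (f \<circ> p \<circ> f_inv)) |` D"

definition partial_to_perm :: "('a \<Rightarrow> 'a option) \<Rightarrow> nat \<Rightarrow> nat" where
  "partial_to_perm a i = (if i \<in> {1..k} then f_inv (the (a (f i))) else i)"

lemma bij_f_inv: "bij_betw f_inv D {1..k}"
  unfolding f_inv_def using bij_f by (rule bij_betw_inv_into)

lemma f_f_inv [simp]: "x \<in> D \<Longrightarrow> f (f_inv x) = x"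
  unfolding f_inv_def using bij_f by (simp add: bij_betw_inv_into_right)

lemma f_inv_f [simp]: "i \<in> {1..k} \<Longrightarrow> f_inv (f i) = i"
  unfolding f_inv_def using bij_f by (simp add: bij_betw_inv_into_left)

lemma f_in: "i \<in> {1..k} \<Longrightarrow> f i \<in> D"
  using bij_betwE[OF bij_f] by blast

lemma f_inv_in: "x \<in> D \<Longrightarrow> f_inv x \<in> {1..k}"
  using bij_betwE[OF bij_f_inv] by blast

lemma perm_to_partial_apply:
  "perm_to_partial p x = (if x \<in> D then Some (f (p (f_inv x))) else None)"
  by (simp add: perm_to_partial_def)

lemma perm_to_partial_in_carrier:
  assumes "p permutes {1..k}"
  shows "perm_to_partial p \<in> carrier (partial_perm_group D)"
proof -
  have "bij_betw (f \<circ> p \<circ> f_inv) D D"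
    using bij_f_inv permutes_imp_bij[OF assms] bij_f by (blast intro: bij_betw_trans)
  then show ?thesis
    by (auto simp: perm_to_partial_def partial_perm_group_def bij_betw_def inj_on_def)
qed

lemma partial_to_perm_permutes:
  assumes "a \<in> carrier (partial_perm_group D)"
  shows "partial_to_perm a permutes {1..k}"
proof -
  have "bij_betw (the \<circ> a) D D"
    using assms bij_betw_the_map[of a] by (simp add: partial_perm_group_def)
  then have "bij_betw (f_inv \<circ> (the \<circ> a) \<circ> f) {1..k} {1..k}"
    using bij_f bij_f_inv by (blast intro: bij_betw_trans)
  then have "bij_betw (partial_to_perm a) {1..k} {1..k}"
    by (rule bij_betw_cong[THEN iffD1, rotated]) (simp add: partial_to_perm_def)
  then show ?thesis
    by (rule bij_imp_permutes) (auto simp: partial_to_perm_def)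
qed

lemma partial_to_perm_to_partial:
  assumes "p permutes {1..k}"
  shows "partial_to_perm (perm_to_partial p) = p"
proof
  fix i show "partial_to_perm (perm_to_partial p) i = p i"
    using f_in permutes_in_image[OF assms, of i] permutes_not_in[OF assms, of i]
    by (simp add: partial_to_perm_def perm_to_partial_apply)
qed

lemma perm_to_partial_to_perm:
  assumes a: "a \<in> carrier (partial_perm_group D)"
  shows "perm_to_partial (partial_to_perm a) = a"
proof
  fix x show "perm_to_partial (partial_to_perm a) x = a x"
  proof (cases "x \<in> D")
    case True
    have "x \<in> dom a" "ran a = D"
      using a True by (auto simp: partial_perm_group_def)
    then obtain y where "a x = Some y" "y \<in> D"
      by (auto intro: ranI)
    then show ?thesis
      using True f_inv_in by (simp add: perm_to_partial_apply partial_to_perm_def)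
  next
    case False
    then show ?thesis
      using a by (auto simp: perm_to_partial_apply partial_perm_group_def)
  qed
qed

lemma perm_to_partial_comp:
  assumes "q permutes {1..k}"
  shows "perm_to_partial (p \<circ> q) = perm_to_partial p \<circ>\<^sub>m perm_to_partial q"
proof
  fix x show "perm_to_partial (p \<circ> q) x = (perm_to_partial p \<circ>\<^sub>m perm_to_partial q) x"
    using f_in f_inv_in permutes_in_image[OF assms] by (simp add: perm_to_partial_apply)
qed

lemma perm_to_partial_id: "perm_to_partial id = Some |` D"
  by (auto simp: perm_to_partial_apply)

lemma perm_to_partial_iso: "perm_to_partial \<in> iso (sym_group k) (partial_perm_group D)"
proof (rule isoI)
  show "perm_to_partial \<in> hom (sym_group k) (partial_perm_group D)"
    using perm_to_partial_in_carrier perm_to_partial_comp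
    by (auto simp: hom_def sym_group_def partial_perm_group_def)
  show "bij_betw perm_to_partial (carrier (sym_group k)) (carrier (partial_perm_group D))"
    using perm_to_partial_in_carrier partial_to_perm_permutes
      partial_to_perm_to_partial perm_to_partial_to_perm
    by (intro bij_betw_byWitness[where f' = partial_to_perm]) (auto simp: sym_group_def)
qed

end

lemma partial_perm_group_iso_sym_group:
  assumes "finite D"
  shows "group (partial_perm_group D) \<and> partial_perm_group D \<cong> sym_group (card D)"
proof -
  obtain f where "bij_betw f {1..card D} D"
    using ex_bij_betw_nat_finite_1[OF assms] by blast
  then interpret enumerated_set f "card D" D
    by unfold_locales
  have "group ((partial_perm_group D)\<lparr>one := Some |` D\<rparr>)"
    using group.iso_imp_img_group[OF sym_group_is_group perm_to_partial_iso]
    by (simp add: sym_group_def perm_to_partial_id)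
  then have "group (partial_perm_group D)"
    by (simp add: partial_perm_group_def)
  moreover have "sym_group (card D) \<cong> partial_perm_group D"
    using perm_to_partial_iso by (rule is_isoI)
  ultimately show ?thesis
    using group.iso_sym[OF sym_group_is_group] by blast
qed

lemma ORn_pinj: "a \<in> ORn m \<Longrightarrow> pinj (2*m) a"
  by (simp add: ORn_def)

lemma ORn_rk_le_or_Wprime: "a \<in> ORn m \<Longrightarrow> rk a \<le> m \<or> a \<in> Wprime m"
  unfolding ORn_def by (blast intro: less_imp_le)

lemma admissible_dom_ORn: "a \<in> ORn m \<Longrightarrow> a \<notin> Wprime m \<Longrightarrow> admissible (2*m) (dom a)"
  unfolding ORn_def by blast

lemma ORn_low_rankI:
  assumes "pinj (2*m) a" "rk a \<le> m" "admissible (2*m) (dom a)" "ran a = dom a"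
  shows "a \<in> ORn m"
  using assms unfolding ORn_def by (cases "rk a < m") auto

lemma Wprime_subset_ORn: "Wprime m \<subseteq> ORn m"
proof
  fix a assume "a \<in> Wprime m"
  moreover from this have "pinj (2*m) a"
    by (simp add: Wprime_def Wgrp_def)
  ultimately show "a \<in> ORn m"
    by (simp add: ORn_def)
qed

lemma pinj_map_inv: "pinj n a \<Longrightarrow> pinj n (map_inv a)"
  using inj_on_map_inv[of a] by (simp add: pinj_def ran_map_inv)

lemma ran_Wgrp:
  assumes "a \<in> Wgrp m" shows "ran a = {1..2*m}"
proof (rule card_subset_eq)
  have "pinj (2*m) a" "dom a = {1..2*m}"
    using assms by (auto simp: Wgrp_def)
  then show "ran a \<subseteq> {1..2*m}" "card (ran a) = card {1..2*m}"
    using bij_betw_same_card[OF bij_betw_the_map[of a]] by (auto simp: pinj_def)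
qed simp

lemma map_inv_Wprime:
  assumes a: "a \<in> Wprime m"
  shows "map_inv a \<in> Wprime m"
proof -
  let ?N = "{1..2*m}" and ?L = "{1..m}" and ?U = "{m+1..2*m}"
  have pinj: "pinj (2*m) a" and dom_a: "dom a = ?N" and ran_a: "ran a = ?N"
    and theta: "\<And>i. i \<in> ?N \<Longrightarrow> a (theta (2*m) i) = map_option (theta (2*m)) (a i)"
    and parity: "even (card (ran (a |` ?L) \<inter> ?U))"
    using a ran_Wgrp[of a m] by (auto simp: Wprime_def Wgrp_def)
  have inj: "inj_on a (dom a)"
    using pinj by (simp add: pinj_def)
  have theta_inv: "map_inv a (theta (2*m) i) = map_option (theta (2*m)) (map_inv a i)"
    if i: "i \<in> ?N" for i
  proof -
    have "i \<in> ran a"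
      using i ran_a by simp
    then obtain x where x: "a x = Some i"
      by (auto simp: ran_def)
    then have "x \<in> ?N"
      using dom_a by blast
    then have "a (theta (2*m) x) = Some (theta (2*m) i)"
      using theta x by simp
    with x have "map_inv a (theta (2*m) i) = Some (theta (2*m) x)" "map_inv a i = Some x"
      by (simp_all add: map_inv_eq_Some_iff[OF inj])
    then show ?thesis by simp
  qed
  have U_eq: "ran (b |` ?L) \<inter> ?U = ran (b |` ?L) - ?L" if "ran b = ?N" for b
    using that ran_restrict_subset[of b ?L] by auto
  have "ran (map_inv a) = ?N"
    by (simp add: ran_map_inv[OF inj] dom_a)
  then have "card (ran (map_inv a |` ?L) \<inter> ?U) = card (ran (map_inv a |` ?L) - ?L)"
    by (simp only: U_eq)
  also have "\<dots> = card (ran (a |` ?L) - ?L)"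
    by (rule card_ran_map_inv_restrict_diff[OF inj dom_a ran_a]) auto
  also have "\<dots> = card (ran (a |` ?L) \<inter> ?U)"
    by (simp only: U_eq[OF ran_a])
  finally have "card (ran (map_inv a |` ?L) \<inter> ?U) = card (ran (a |` ?L) \<inter> ?U)" .
  with parity show ?thesis
    using pinj_map_inv[OF pinj] theta_inv ran_a by (simp add: Wprime_def Wgrp_def)
qed

lemma map_inv_ORn:
  assumes a: "a \<in> ORn m" and "dom a = ran a"
  shows "map_inv a \<in> ORn m"
proof (cases "a \<in> Wprime m")
  case True
  then show ?thesis
    using map_inv_Wprime Wprime_subset_ORn by blast
next
  case False
  have pinj: "pinj (2*m) a"
    using a by (rule ORn_pinj)
  then have "dom (map_inv a) = dom a" "ran (map_inv a) = dom a"
    using \<open>dom a = ran a\<close> by (simp_all add: pinj_def ran_map_inv)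
  moreover have "rk a \<le> m"
    using ORn_rk_le_or_Wprime[OF a] False by blast
  ultimately show ?thesis
    using admissible_dom_ORn[OF a False] pinj_map_inv[OF pinj]
    by (intro ORn_low_rankI) (simp_all add: rk_def)
qed

lemma greenH_idempotent_iff:
  assumes e: "e \<in> ORn m" "e \<circ>\<^sub>m e = e" and a: "a \<in> ORn m"
  shows "greenH m a e \<longleftrightarrow> dom a = dom e \<and> ran a = dom e"
proof -
  have e_eq: "e = Some |` dom e"
    using idempotent_map_eq_restrict_Some[OF _ e(2)] ORn_pinj[OF e(1)] by (simp add: pinj_def)
  then have ran_e: "ran e = dom e"
    by (metis ran_restrict_Some)
  show ?thesis
  proof
    assume "greenH m a e"
    then obtain x y x' y' where "e = a \<circ>\<^sub>m x" "a = e \<circ>\<^sub>m y" "e = x' \<circ>\<^sub>m a" "a = y' \<circ>\<^sub>m e"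
      unfolding greenH_def greenR_def greenL_def by blast
    then have "ran e \<subseteq> ran a" "ran a \<subseteq> ran e" "dom e \<subseteq> dom a" "dom a \<subseteq> dom e"
      using ran_map_comp_subset dom_map_comp_subset by metis+
    with ran_e show "dom a = dom e \<and> ran a = dom e" by auto
  next
    assume da: "dom a = dom e \<and> ran a = dom e"
    have inj_a: "inj_on a (dom a)"
      using ORn_pinj[OF a] by (simp add: pinj_def)
    have "e = a \<circ>\<^sub>m map_inv a" "e = map_inv a \<circ>\<^sub>m a"
      using e_eq da map_comp_map_inv[OF inj_a] map_inv_map_comp[OF inj_a] by simp_all
    moreover have "a = e \<circ>\<^sub>m a" "a = a \<circ>\<^sub>m e"
      using da restrict_Some_map_comp[of a "dom e"] map_comp_restrict_Some[of a "dom e"]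
      by (simp_all flip: e_eq)
    moreover have "map_inv a \<in> ORn m"
      using map_inv_ORn[OF a] da by simp
    ultimately show "greenH m a e"
      unfolding greenH_def greenR_def greenL_def using a e(1) by blast
  qed
qed

lemma Hclass_idempotent:
  assumes "e \<in> ORn m" "e \<circ>\<^sub>m e = e"
  shows "Hclass m e = {a \<in> ORn m. dom a = dom e \<and> ran a = dom e}"
  using greenH_idempotent_iff[OF assms] unfolding Hclass_def by blast

lemma Hclass_full_rank:
  assumes "m \<ge> 1" and e: "e \<in> ORn m" "e \<circ>\<^sub>m e = e" and "rk e = 2*m"
  shows "Hclass m e = Wprime m"
proof -
  have "dom e \<subseteq> {1..2*m}" "card (dom e) = card {1..2*m}"
    using ORn_pinj[OF e(1)] \<open>rk e = 2*m\<close> by (simp_all add: pinj_def rk_def)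
  then have dom_e: "dom e = {1..2*m}"
    using card_subset_eq finite_atLeastAtMost by blast
  have to_Wprime: "a \<in> Wprime m" if "a \<in> ORn m" "dom a = {1..2*m}" for a
  proof -
    have "\<not> rk a \<le> m"
      using that(2) \<open>m \<ge> 1\<close> by (simp add: rk_def)
    then show ?thesis
      using ORn_rk_le_or_Wprime[OF that(1)] by blast
  qed
  have dom_ran_Wprime: "dom a = {1..2*m} \<and> ran a = {1..2*m}" if "a \<in> Wprime m" for a
    using that ran_Wgrp by (simp add: Wprime_def Wgrp_def)
  have "Hclass m e = {a \<in> ORn m. dom a = {1..2*m} \<and> ran a = {1..2*m}}"
    using Hclass_idempotent[OF e] dom_e by simp
  also have "\<dots> = Wprime m"
    using to_Wprime dom_ran_Wprime Wprime_subset_ORn[of m] by auto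
  finally show ?thesis .
qed

lemma Hgroup_low_rank:
  assumes "m \<ge> 1" and e: "e \<in> ORn m" "e \<circ>\<^sub>m e = e" and "rk e \<le> m"
  shows "Hgroup m e = partial_perm_group (dom e)"
proof -
  define D where "D = dom e"
  have pinj_e: "pinj (2*m) e"
    using e(1) by (rule ORn_pinj)
  have "D \<noteq> {1..2*m}"
    using \<open>rk e \<le> m\<close> \<open>m \<ge> 1\<close> by (auto simp: rk_def D_def)
  then have "e \<notin> Wprime m"
    by (auto simp: Wprime_def Wgrp_def D_def)
  then have adm: "admissible (2*m) D"
    using admissible_dom_ORn[OF e(1)] by (simp add: D_def)
  have "a \<in> ORn m" if "a \<in> carrier (partial_perm_group D)" for a
    using that pinj_e adm \<open>rk e \<le> m\<close>
    by (intro ORn_low_rankI) (auto simp: partial_perm_group_def pinj_def rk_def D_def)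
  then have "Hclass m e = carrier (partial_perm_group D)"
    using Hclass_idempotent[OF e] ORn_pinj[of _ m]
    by (auto simp: partial_perm_group_def pinj_def simp flip: D_def)
  moreover have "e = Some |` D"
    using idempotent_map_eq_restrict_Some[OF _ e(2)] pinj_e unfolding pinj_def D_def by blast
  ultimately have "Hgroup m e = partial_perm_group D"
    by (simp add: Hgroup_def partial_perm_group_def)
  then show ?thesis
    by (simp add: D_def)
qed

theorem proposition3p5:
  fixes m k :: nat and e :: "nat \<Rightarrow> nat option"
  assumes "m \<ge> 1"
    and "e \<in> ORn m" and "e \<circ>\<^sub>m e = e" and "rk e = k"
  shows "(k = 2*m \<longrightarrow> Hclass m e = Wprime m)
       \<and> (k \<in> {1..m} \<longrightarrow> group (Hgroup m e) \<and> Hgroup m e \<cong> sym_group k)"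
proof
  show "k = 2*m \<longrightarrow> Hclass m e = Wprime m"
    using Hclass_full_rank assms by blast
  show "k \<in> {1..m} \<longrightarrow> group (Hgroup m e) \<and> Hgroup m e \<cong> sym_group k"
  proof
    assume "k \<in> {1..m}"
    then have "Hgroup m e = partial_perm_group (dom e)"
      using Hgroup_low_rank assms by simp
    moreover have "finite (dom e)"
      using ORn_pinj[OF \<open>e \<in> ORn m\<close>] by (auto simp: pinj_def intro: finite_subset)
    ultimately show "group (Hgroup m e) \<and> Hgroup m e \<cong> sym_group k"
      using partial_perm_group_iso_sym_group[of "dom e"] \<open>rk e = k\<close> by (simp add: rk_def)
  qed
qed

end
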